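(* Let $f:\mathbb{R}^n\to\mathbb{R}$ be convex and differentiable with $\nabla f$ $L$-Lipschitz continuous, and assume $X^*$ is non-empty. Then the sequence $\{x^k\}$ generated by Algorithm 3 (run without stopping, with $\nabla f(x^k)\ne0$ for all $k$) converges to a point of $X^*$.
   Context: $X^*=\{x:\nabla f(x)=0\}$ (the set of minimizers of the convex $f$). Algorithm 3: parameters $0<\mu<\nu<1$, $0<\underline{h}<1\le\gamma_0^0\le\overline{h}<\frac4L$, $0\le\beta\le1$, $\theta\in(0,1)$, $\tau>1$, $\eta\in(0,2)$, starting point $x^0$; run while $\nabla f(x^k)\neq0$. At iteration $k$: for $\gamma>0$ let $z^k(\gamma)=x^k-\gamma\nabla f(x^k)$ and $r_k(\gamma)=\gamma\|\nabla f(z^k(\gamma))-\nabla f(x^k)\|/\|z^k(\gamma)-x^k\|$; starting from $\gamma_0^k$, while $r_k(\gamma_l^k)>\nu$ set $\gamma_{l+1}^k=\gamma_l^k\theta\min\{1,1/r_k(\gamma_l^k)\}$; let $h_k$ be the first $\gamma_l^k$ with $r_k(\gamma_l^k)\le\nu$. Then $z^k=x^k-h_k\nabla f(x^k)$ and $x^{k+1}=x^k-\eta\alpha_kh_k\big(\nabla f(x^k)-\beta(\nabla f(x^k)-\nabla f(z^k))\big)$ with $$\alpha_k=\frac{(1-\beta)\left(1-\frac{Lh_k}{4}\right)\|x^k-z^k\|^2+\beta\langle x^k-z^k,h_k\nabla f(z^k)\rangle}{h_k^2\|\nabla f(x^k)-\beta(\nabla f(x^k)-\nabla f(z^k))\|^2};$$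 finally $\gamma_0^{k+1}=\mathbf{P}_{[\underline{h},\overline{h}]}(\tau h_k)$ if $r_k(h_k)\le\mu$, else $\gamma_0^{k+1}=\mathbf{P}_{[\underline{h},\overline{h}]}(h_k)$, where $\mathbf{P}_{[a,b]}$ is projection onto $[a,b]$. *)

theory Defs
  imports "HOL-Analysis.Analysis"
begin

text \<open>Algorithm 3. The gradient of f is passed as the function g.\<close>

definition alg3_r :: "('a::real_normed_vector \<Rightarrow> 'a) \<Rightarrow> 'a \<Rightarrow> real \<Rightarrow> real" where
  "alg3_r g x \<gamma> =
     (let z = x - \<gamma> *\<^sub>R g x in \<gamma> * norm (g z - g x) / norm (z - x))"

fun alg3_ls :: "('a::real_normed_vector \<Rightarrow> 'a) \<Rightarrow> real \<Rightarrow> 'a \<Rightarrow> real \<Rightarrow> nat \<Rightarrow> real" where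
  "alg3_ls g \<theta> x \<gamma>0 0 = \<gamma>0"
| "alg3_ls g \<theta> x \<gamma>0 (Suc l) =
     (let \<gamma> = alg3_ls g \<theta> x \<gamma>0 l in \<gamma> * \<theta> * min 1 (1 / alg3_r g x \<gamma>))"

definition alg3_h :: "('a::real_normed_vector \<Rightarrow> 'a) \<Rightarrow> real \<Rightarrow> real \<Rightarrow> 'a \<Rightarrow> real \<Rightarrow> real" where
  "alg3_h g \<nu> \<theta> x \<gamma>0 =
     alg3_ls g \<theta> x \<gamma>0 (LEAST l. alg3_r g x (alg3_ls g \<theta> x \<gamma>0 l) \<le> \<nu>)"

definition proj_interval :: "real \<Rightarrow> real \<Rightarrow> real \<Rightarrow> real" where
  "proj_interval a b t = max a (min b t)"

definition alg3_step ::
  "('a::real_inner \<Rightarrow> 'a) \<Rightarrow> real \<Rightarrow> real \<Rightarrow> real \<Rightarrow> real \<Rightarrow> real \<Rightarrow> real \<Rightarrow> real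
     \<Rightarrow> real \<Rightarrow> real \<Rightarrow> 'a \<times> real \<Rightarrow> 'a \<times> real" where
  "alg3_step g L \<mu> \<nu> hlo hup \<beta> \<theta> \<tau> \<eta> s =
     (let x = fst s; \<gamma>0 = snd s;
          h = alg3_h g \<nu> \<theta> x \<gamma>0;
          z = x - h *\<^sub>R g x;
          d = g x - \<beta> *\<^sub>R (g x - g z);
          \<alpha> = ((1 - \<beta>) * (1 - L * h / 4) * (norm (x - z))\<^sup>2 + \<beta> * inner (x - z) (h *\<^sub>R g z))
              / (h\<^sup>2 * (norm d)\<^sup>2);
          x' = x - (\<eta> * \<alpha> * h) *\<^sub>R d;
          \<gamma>0' = (if alg3_r g x h \<le> \<mu> then proj_interval hlo hup (\<tau> * h)
                 else proj_interval hlo hup h)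
      in (x', \<gamma>0'))"

fun alg3 ::
  "('a::real_inner \<Rightarrow> 'a) \<Rightarrow> real \<Rightarrow> real \<Rightarrow> real \<Rightarrow> real \<Rightarrow> real \<Rightarrow> real \<Rightarrow> real
     \<Rightarrow> real \<Rightarrow> real \<Rightarrow> 'a \<Rightarrow> real \<Rightarrow> nat \<Rightarrow> 'a \<times> real" where
  "alg3 g L \<mu> \<nu> hlo hup \<beta> \<theta> \<tau> \<eta> x0 \<gamma>00 0 = (x0, \<gamma>00)"
| "alg3 g L \<mu> \<nu> hlo hup \<beta> \<theta> \<tau> \<eta> x0 \<gamma>00 (Suc k) =
     alg3_step g L \<mu> \<nu> hlo hup \<beta> \<theta> \<tau> \<eta> (alg3 g L \<mu> \<nu> hlo hup \<beta> \<theta> \<tau> \<eta> x0 \<gamma>00 k)"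

end

theory Submission
  imports Defs
begin

text \<open>
  Each iteration moves \<open>x\<^sup>k\<close> by the \<open>\<eta>\<close>-relaxed projection onto the halfspace
  \<open>H\<^sub>k = {y. num\<^sub>k \<le> \<langle>h\<^sub>k d\<^sub>k, x\<^sup>k - y\<rangle>}\<close>, where \<open>d\<^sub>k\<close> is the search direction and
  \<open>num\<^sub>k\<close> the numerator of \<open>\<alpha>\<^sub>k\<close>. The gradient of a convex function with \<open>L\<close>-Lipschitz
  gradient is \<open>1/L\<close>-cocoercive, so \<open>H\<^sub>k\<close> contains \<open>X\<^sup>*\<close>, and the squared distance to every
  point of \<open>X\<^sup>*\<close> drops by \<open>\<eta>(2 - \<eta>)\<close> times the squared distance from \<open>x\<^sup>k\<close> to \<open>H\<^sub>k\<close>.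
  The line search keeps \<open>h\<^sub>k \<ge> min hlo (\<theta>\<nu>/L)\<close>, which bounds that distance below by a fixed
  multiple of \<open>\<parallel>\<nabla>f(x\<^sup>k)\<parallel>\<close>. Hence the gradients tend to zero, and the sequence is bounded and
  Fejer monotone with respect to \<open>X\<^sup>*\<close>; its cluster points lie in \<open>X\<^sup>*\<close> by continuity of the
  gradient, and Fejer monotonicity makes the whole sequence converge to any one of them.
  The parameters \<open>\<mu>\<close> and \<open>\<tau>\<close> only steer the next initial trial step within \<open>[hlo, hup]\<close>
  and play no further role.
\<close>

subsection \<open>Convex functions with Lipschitz gradient\<close>

lemma has_real_derivative_along_line:
  fixes f :: "'a::real_inner \<Rightarrow> real"
  assumes grad: "\<And>x. GDERIV f x :> g x"
  shows "((\<lambda>t. f (x + t *\<^sub>R v)) has_real_derivative inner v (g (x + t *\<^sub>R v))) (at t)"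
proof -
  have line: "((\<lambda>t. x + t *\<^sub>R v) has_derivative (\<lambda>s. s *\<^sub>R v)) (at t)"
    by (auto intro!: derivative_eq_intros)
  have "(f has_derivative (\<lambda>w. inner w (g (x + t *\<^sub>R v)))) (at (x + t *\<^sub>R v))"
    using grad by (simp add: gderiv_def)
  from has_derivative_compose[OF line this]
  show ?thesis
    by (simp add: has_field_derivative_def mult.commute[of _ "inner v _"])
qed

lemma convex_on_along_line:
  assumes "convex_on UNIV f"
  shows "convex_on UNIV (\<lambda>t::real. f (x + t *\<^sub>R v))"
proof (rule convex_onI)
  fix t a b :: real assume t: "0 < t" "t < 1"
  have "x + ((1 - t) *\<^sub>R a + t *\<^sub>R b) *\<^sub>R v = (1 - t) *\<^sub>R (x + a *\<^sub>R v) + t *\<^sub>R (x + b *\<^sub>R v)"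
    by (simp add: algebra_simps)
  then show "f (x + ((1 - t) *\<^sub>R a + t *\<^sub>R b) *\<^sub>R v) \<le> (1 - t) * f (x + a *\<^sub>R v) + t * f (x + b *\<^sub>R v)"
    using convex_onD[OF assms, of t] t by simp
qed simp

lemma convex_gradient_inequality:
  fixes f :: "'a::real_inner \<Rightarrow> real"
  assumes convex: "convex_on UNIV f" and grad: "\<And>x. GDERIV f x :> g x"
  shows "f x + inner (g x) (y - x) \<le> f y"
proof -
  have "inner (y - x) (g x) * (1 - 0) \<le> f (x + 1 *\<^sub>R (y - x)) - f (x + 0 *\<^sub>R (y - x))"
    using has_real_derivative_along_line[OF grad, of x "y - x" 0]
    by (intro convex_on_imp_above_tangent[OF convex_on_along_line[OF convex]]) auto
  then show ?thesis by (simp add: inner_commute)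
qed

lemma lipschitz_gradient_upper_bound:
  fixes f :: "'a::real_inner \<Rightarrow> real"
  assumes grad: "\<And>x. GDERIV f x :> g x"
    and lipschitz: "\<And>x y. norm (g x - g y) \<le> L * norm (x - y)"
  shows "f y \<le> f x + inner (g x) (y - x) + L / 2 * (norm (y - x))\<^sup>2"
proof -
  define v where "v = y - x"
  define \<psi> where "\<psi> t = f (x + t *\<^sub>R v) - t * inner (g x) v - L / 2 * t\<^sup>2 * (norm v)\<^sup>2" for t
  have "\<psi> 1 \<le> \<psi> 0"
  proof (rule DERIV_nonpos_imp_nonincreasing[where f = \<psi>])
    fix t :: real assume t: "0 \<le> t" "t \<le> 1"
    define \<psi>' where "\<psi>' = inner v (g (x + t *\<^sub>R v)) - inner (g x) v - L / 2 * (2 * t) * (norm v)\<^sup>2"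
    have "(\<psi> has_real_derivative \<psi>') (at t)"
      unfolding \<psi>_def \<psi>'_def
      by (rule has_real_derivative_along_line[OF grad] derivative_eq_intros refl | simp)+
    moreover have "\<psi>' \<le> 0"
    proof -
      have "inner v (g (x + t *\<^sub>R v)) - inner (g x) v = inner v (g (x + t *\<^sub>R v) - g x)"
        by (simp add: inner_diff_right inner_commute)
      also have "\<dots> \<le> norm v * norm (g (x + t *\<^sub>R v) - g x)"
        by (rule norm_cauchy_schwarz)
      also have "\<dots> \<le> norm v * (L * (t * norm v))"
        using lipschitz[of "x + t *\<^sub>R v" x] t by (intro mult_left_mono) auto
      finally show ?thesis
        by (simp add: \<psi>'_def power2_eq_square algebra_simps)
    qed
    ultimately show "\<exists>y. (\<psi> has_real_derivative y) (at t) \<and> y \<le> 0" by blast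
  qed simp
  then show ?thesis by (simp add: \<psi>_def v_def)
qed

text \<open>Compare the tangent plane at \<open>x\<close> with the quadratic upper bound at \<open>y\<close>, evaluated at
  \<open>y - (g y - g x) / L\<close>.\<close>
lemma convex_lipschitz_gradient_lower_bound:
  fixes f :: "'a::real_inner \<Rightarrow> real"
  assumes convex: "convex_on UNIV f" and grad: "\<And>x. GDERIV f x :> g x"
    and lipschitz: "\<And>x y. norm (g x - g y) \<le> L * norm (x - y)" and L: "0 < L"
  shows "f x + inner (g x) (y - x) + (norm (g y - g x))\<^sup>2 / (2 * L) \<le> f y"
proof -
  define e where "e = g y - g x"
  define w where "w = y - (1 / L) *\<^sub>R e"
  have "f x + inner (g x) (w - x) \<le> f w"
    by (rule convex_gradient_inequality[OF convex grad])
  also have "f w \<le> f y + inner (g y) (w - y) + L / 2 * (norm (w - y))\<^sup>2"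
    by (rule lipschitz_gradient_upper_bound[OF grad lipschitz])
  finally have "f x + inner (g x) (w - x) \<le> f y + inner (g y) (w - y) + L / 2 * (norm (w - y))\<^sup>2" .
  moreover have "inner (g x) (w - x) = inner (g x) (y - x) - inner (g x) e / L"
    by (simp add: w_def inner_diff_right)
  moreover have "inner (g y) (w - y) = - inner (g y) e / L"
    by (simp add: w_def)
  moreover have "L / 2 * (norm (w - y))\<^sup>2 = (norm e)\<^sup>2 / (2 * L)"
    using L by (simp add: w_def power2_eq_square)
  moreover have "inner (g y) e / L = inner (g x) e / L + (norm e)\<^sup>2 / (2 * L) + (norm e)\<^sup>2 / (2 * L)"
  proof -
    have "inner (g y) e = inner (g x) e + (norm e)\<^sup>2"
      by (simp add: e_def power2_norm_eq_inner inner_diff_left)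
    then show ?thesis
      using L by (simp add: field_simps)
  qed
  ultimately show ?thesis
    unfolding e_def by linarith
qed

lemma convex_lipschitz_gradient_cocoercive:
  fixes f :: "'a::real_inner \<Rightarrow> real"
  assumes convex: "convex_on UNIV f" and grad: "\<And>x. GDERIV f x :> g x"
    and lipschitz: "\<And>x y. norm (g x - g y) \<le> L * norm (x - y)" and L: "0 < L"
  shows "(norm (g x - g y))\<^sup>2 / L \<le> inner (g x - g y) (x - y)"
  using convex_lipschitz_gradient_lower_bound[OF assms, of x y]
    convex_lipschitz_gradient_lower_bound[OF assms, of y x]
  by (simp add: norm_minus_commute inner_diff_left inner_diff_right inner_commute field_simps)

subsection \<open>Relaxed projections and Fejer monotone sequences\<close>

lemma relaxed_projection_halfspace:
  fixes x p u :: "'a::real_inner"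
  assumes "u \<noteq> 0" and "s \<le> inner u (x - p)" and "0 \<le> s" and "0 \<le> \<eta>"
  shows "(norm (x - (\<eta> * (s / (norm u)\<^sup>2)) *\<^sub>R u - p))\<^sup>2
         \<le> (norm (x - p))\<^sup>2 - \<eta> * (2 - \<eta>) * (s\<^sup>2 / (norm u)\<^sup>2)"
proof -
  define t where "t = \<eta> * (s / (norm u)\<^sup>2)"
  have "(norm (x - t *\<^sub>R u - p))\<^sup>2 = (norm (x - p))\<^sup>2 - 2 * t * inner u (x - p) + t\<^sup>2 * (norm u)\<^sup>2"
    unfolding power2_norm_eq_inner
    by (simp add: inner_diff_left inner_diff_right inner_commute algebra_simps power2_eq_square)
  also have "\<dots> \<le> (norm (x - p))\<^sup>2 - 2 * t * s + t\<^sup>2 * (norm u)\<^sup>2"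
    using assms mult_left_mono[of s "inner u (x - p)" "2 * t"] by (simp add: t_def)
  also have "\<dots> = (norm (x - p))\<^sup>2 - \<eta> * (2 - \<eta>) * (s\<^sup>2 / (norm u)\<^sup>2)"
    using assms by (simp add: t_def field_simps power2_eq_square)
  finally show ?thesis by (simp add: t_def)
qed

lemma relaxed_projection_halfspace_decrease:
  fixes x p u :: "'a::real_inner"
  assumes "s \<le> inner u (x - p)" and "0 < \<delta>" and "\<delta> \<le> s / norm u" and "0 \<le> \<eta>" and "\<eta> \<le> 2"
  shows "(norm (x - (\<eta> * (s / (norm u)\<^sup>2)) *\<^sub>R u - p))\<^sup>2 + \<eta> * (2 - \<eta>) * \<delta>\<^sup>2 \<le> (norm (x - p))\<^sup>2"
proof -
  have "0 < s / norm u"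
    using assms(2,3) by linarith
  then have "0 < s" and "u \<noteq> 0"
    using norm_ge_zero[of u] by (auto simp: zero_less_divide_iff)
  have "\<delta>\<^sup>2 \<le> s\<^sup>2 / (norm u)\<^sup>2"
    using power_mono[OF assms(3), of 2] assms(2) by (simp add: power_divide)
  from mult_left_mono[OF this, of "\<eta> * (2 - \<eta>)"]
  have "\<eta> * (2 - \<eta>) * \<delta>\<^sup>2 \<le> \<eta> * (2 - \<eta>) * (s\<^sup>2 / (norm u)\<^sup>2)"
    using assms(4,5) by simp
  with relaxed_projection_halfspace[OF \<open>u \<noteq> 0\<close> assms(1)] \<open>0 < s\<close> assms(4) show ?thesis
    by fastforce
qed

lemma sufficient_decrease_tendsto_zero:
  fixes a b :: "nat \<Rightarrow> real"
  assumes decrease: "\<And>k. a (Suc k) + b k \<le> a k" and "\<And>k. 0 \<le> a k" and "\<And>k. 0 \<le> b k"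
  shows "b \<longlonglongrightarrow> 0"
proof (rule summable_LIMSEQ_zero)
  have "(\<Sum>k<n. b k) \<le> (\<Sum>k<n. a k - a (Suc k))" for n
    using decrease by (intro sum_mono) (simp add: algebra_simps)
  also have "(\<Sum>k<n. a k - a (Suc k)) \<le> a 0" for n
    using assms(2)[of n] by (simp add: sum_lessThan_telescope')
  finally show "summable b"
    by (rule summableI_nonneg_bounded[OF assms(3)])
qed

lemma fejer_monotone_convergent:
  fixes X :: "nat \<Rightarrow> 'a::heine_borel"
  assumes "p \<in> S"
    and fejer: "\<And>p k. p \<in> S \<Longrightarrow> dist (X (Suc k)) p \<le> dist (X k) p"
    and cluster: "\<And>r x. strict_mono r \<Longrightarrow> (X \<circ> r) \<longlonglongrightarrow> x \<Longrightarrow> x \<in> S"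
  shows "\<exists>x\<in>S. X \<longlonglongrightarrow> x"
proof -
  have dec: "decseq (\<lambda>k. dist (X k) p)" if "p \<in> S" for p
    using fejer[OF that] by (rule decseq_SucI)
  have "bounded (range X)"
    unfolding bounded_def using decseqD[OF dec[OF \<open>p \<in> S\<close>], of 0]
    by (auto simp: dist_commute)
  then obtain x r where r: "strict_mono r" and xr: "(X \<circ> r) \<longlonglongrightarrow> x"
    using bounded_imp_convergent_subsequence by blast
  have "x \<in> S" using cluster[OF r xr] .
  have "X \<longlonglongrightarrow> x"
  proof (rule metric_LIMSEQ_I)
    fix e :: real assume "0 < e"
    then obtain K where "dist (X (r K)) x < e"
      using metric_LIMSEQ_D[OF xr] by (metis comp_apply order_refl)
    then have "\<forall>n\<ge>r K. dist (X n) x < e"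
      using decseqD[OF dec[OF \<open>x \<in> S\<close>]] by (meson le_less_trans)
    then show "\<exists>K. \<forall>n\<ge>K. dist (X n) x < e" by blast
  qed
  with \<open>x \<in> S\<close> show ?thesis by blast
qed

lemma fejer_sufficient_decrease_convergent:
  fixes X :: "nat \<Rightarrow> 'a::{real_normed_vector, heine_borel}" and g :: "'a \<Rightarrow> 'b::real_normed_vector"
  assumes g: "continuous_on UNIV g" and "g p = 0" and C: "0 < C"
    and decrease: "\<And>p k. g p = 0 \<Longrightarrow> (norm (X (Suc k) - p))\<^sup>2 + C * (norm (g (X k)))\<^sup>2 \<le> (norm (X k - p))\<^sup>2"
  shows "\<exists>x. g x = 0 \<and> X \<longlonglongrightarrow> x"
proof -
  have "(\<lambda>k. C * (norm (g (X k)))\<^sup>2) \<longlonglongrightarrow> 0"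
    using decrease[OF \<open>g p = 0\<close>] C
    by (intro sufficient_decrease_tendsto_zero[where a = "\<lambda>k. (norm (X k - p))\<^sup>2"]) auto
  then have "(\<lambda>k. sqrt ((C * (norm (g (X k)))\<^sup>2) / C)) \<longlonglongrightarrow> sqrt (0 / C)"
    using C by (auto intro!: tendsto_intros)
  then have g0: "(\<lambda>k. g (X k)) \<longlonglongrightarrow> 0"
    using C by (simp add: tendsto_norm_zero_iff)
  have "\<exists>x\<in>{x. g x = 0}. X \<longlonglongrightarrow> x"
  proof (rule fejer_monotone_convergent)
    show "p \<in> {x. g x = 0}" using \<open>g p = 0\<close> by simp
    show "dist (X (Suc k)) q \<le> dist (X k) q" if "q \<in> {x. g x = 0}" for q k
    proof -
      have "0 \<le> C * (norm (g (X k)))\<^sup>2"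
        using C by simp
      moreover have "g q = 0"
        using that by simp
      ultimately have "(norm (X (Suc k) - q))\<^sup>2 \<le> (norm (X k - q))\<^sup>2"
        using decrease[of q k] by linarith
      then show ?thesis
        unfolding dist_norm by (rule power2_le_imp_le) simp
    qed
    show "x \<in> {x. g x = 0}" if r: "strict_mono r" and xr: "(X \<circ> r) \<longlonglongrightarrow> x" for r x
    proof -
      have "(\<lambda>k. g (X (r k))) \<longlonglongrightarrow> g x"
        using continuous_on_tendsto_compose[OF g xr] by (simp add: comp_def)
      moreover have "(\<lambda>k. g (X (r k))) \<longlonglongrightarrow> 0"
        using LIMSEQ_subseq_LIMSEQ[OF g0 r] by (simp add: comp_def)
      ultimately show ?thesis by (simp add: LIMSEQ_unique)
    qed
  qed
  then show ?thesis by blast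
qed

subsection \<open>The backtracking line search\<close>

lemma alg3_r_eq:
  assumes "g x \<noteq> 0" and "0 < \<gamma>"
  shows "alg3_r g x \<gamma> = norm (g (x - \<gamma> *\<^sub>R g x) - g x) / norm (g x)"
  using assms by (simp add: alg3_r_def Let_def)

lemma alg3_r_le_lipschitz:
  assumes lipschitz: "\<And>x y. norm (g x - g y) \<le> L * norm (x - y)"
    and "g x \<noteq> 0" and "0 < \<gamma>"
  shows "alg3_r g x \<gamma> \<le> L * \<gamma>"
proof -
  have "norm (g (x - \<gamma> *\<^sub>R g x) - g x) \<le> L * \<gamma> * norm (g x)"
    using lipschitz[of "x - \<gamma> *\<^sub>R g x" x] assms by (simp add: mult.assoc)
  then show ?thesis
    using assms by (simp add: alg3_r_eq divide_le_eq)
qed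

lemma alg3_ls_rejected_bounds:
  assumes "0 < \<gamma>0" and "0 < \<theta>" and "\<theta> < 1" and "0 \<le> \<nu>"
    and "\<forall>j<l. \<nu> < alg3_r g x (alg3_ls g \<theta> x \<gamma>0 j)"
  shows "0 < alg3_ls g \<theta> x \<gamma>0 l \<and> alg3_ls g \<theta> x \<gamma>0 l \<le> \<theta> ^ l * \<gamma>0"
  using assms(5)
proof (induction l)
  case 0
  then show ?case using assms(1) by simp
next
  case (Suc l)
  define \<gamma> where "\<gamma> = alg3_ls g \<theta> x \<gamma>0 l"
  define m where "m = min 1 (1 / alg3_r g x \<gamma>)"
  have "0 < \<gamma>" "\<gamma> \<le> \<theta> ^ l * \<gamma>0"
    using Suc by (auto simp: \<gamma>_def)
  moreover have "0 < m" "m \<le> 1"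
    using Suc.prems assms(4) by (auto simp: m_def \<gamma>_def)
  ultimately have "0 < \<gamma> * \<theta> * m"
    using assms(2) by simp
  moreover have "\<gamma> * \<theta> * m \<le> \<theta> ^ Suc l * \<gamma>0"
  proof -
    have "\<gamma> * \<theta> * m \<le> \<gamma> * \<theta>"
      using \<open>m \<le> 1\<close> \<open>0 < \<gamma>\<close> assms(2) by (simp add: mult_left_le)
    also have "\<dots> \<le> \<theta> ^ Suc l * \<gamma>0"
      using mult_right_mono[OF \<open>\<gamma> \<le> \<theta> ^ l * \<gamma>0\<close>, of \<theta>] assms(2) by (simp add: mult_ac)
    finally show ?thesis .
  qed
  ultimately show ?case
    by (simp add: Let_def \<gamma>_def[symmetric] m_def[symmetric])
qed

lemma alg3_ls_terminates:
  assumes lipschitz: "\<And>x y. norm (g x - g y) \<le> L * norm (x - y)"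
    and "0 < L" and "g x \<noteq> 0" and "0 < \<gamma>0" and "0 < \<theta>" and "\<theta> < 1" and "0 < \<nu>"
  shows "\<exists>l. alg3_r g x (alg3_ls g \<theta> x \<gamma>0 l) \<le> \<nu>"
proof (rule ccontr)
  assume "\<not> ?thesis"
  then have rejected: "\<forall>j<l. \<nu> < alg3_r g x (alg3_ls g \<theta> x \<gamma>0 j)" for l
    by (auto simp: not_le)
  obtain l where l: "\<theta> ^ l < \<nu> / (L * \<gamma>0)"
    using real_arch_pow_inv[of "\<nu> / (L * \<gamma>0)" \<theta>] assms by auto
  have "0 < alg3_ls g \<theta> x \<gamma>0 l" "alg3_ls g \<theta> x \<gamma>0 l \<le> \<theta> ^ l * \<gamma>0"
    using alg3_ls_rejected_bounds[OF assms(4-6) _ rejected] assms(7) by auto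
  then have "alg3_r g x (alg3_ls g \<theta> x \<gamma>0 l) \<le> L * (\<theta> ^ l * \<gamma>0)"
    using alg3_r_le_lipschitz[OF lipschitz assms(3)] assms(2)
    by (meson mult_left_mono less_imp_le order_trans)
  also have "\<dots> < \<nu>"
    using l assms by (simp add: less_divide_eq mult.commute mult.left_commute)
  finally show False
    using rejected[of "Suc l"] by auto
qed

lemma backtracking_step_lower_bound:
  fixes \<gamma> \<rho> :: real
  assumes "0 < \<gamma>" and "\<nu> < \<rho>" and "\<rho> \<le> L * \<gamma>" and "0 < \<nu>" and "\<nu> \<le> 1" and "0 < L" and "0 \<le> \<theta>"
  shows "\<theta> * \<nu> / L \<le> \<gamma> * \<theta> * min 1 (1 / \<rho>)"
proof -
  have "\<nu> / L \<le> \<gamma> * min 1 (1 / \<rho>)"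
  proof (cases "\<rho> \<le> 1")
    case True
    then show ?thesis
      using assms by (simp add: divide_le_eq mult.commute)
  next
    case False
    then have "1 / L \<le> \<gamma> / \<rho>"
      using assms by (simp add: divide_le_eq le_divide_eq mult.commute)
    moreover have "\<nu> / L \<le> 1 / L"
      using assms by (simp add: divide_right_mono)
    ultimately show ?thesis
      using False by simp
  qed
  from mult_left_mono[OF this assms(7)] show ?thesis
    by (simp add: mult_ac)
qed

lemma alg3_h_first_accepted:
  assumes "\<exists>l. alg3_r g x (alg3_ls g \<theta> x \<gamma>0 l) \<le> \<nu>"
  obtains l where "alg3_h g \<nu> \<theta> x \<gamma>0 = alg3_ls g \<theta> x \<gamma>0 l"
    and "alg3_r g x (alg3_ls g \<theta> x \<gamma>0 l) \<le> \<nu>"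
    and "\<forall>j<l. \<nu> < alg3_r g x (alg3_ls g \<theta> x \<gamma>0 j)"
proof
  let ?l = "LEAST l. alg3_r g x (alg3_ls g \<theta> x \<gamma>0 l) \<le> \<nu>"
  show "alg3_h g \<nu> \<theta> x \<gamma>0 = alg3_ls g \<theta> x \<gamma>0 ?l"
    by (simp add: alg3_h_def)
  show "alg3_r g x (alg3_ls g \<theta> x \<gamma>0 ?l) \<le> \<nu>"
    using LeastI_ex[OF assms] .
  show "\<forall>j<?l. \<nu> < alg3_r g x (alg3_ls g \<theta> x \<gamma>0 j)"
    using not_less_Least by force
qed

lemma alg3_h_bounds:
  assumes lipschitz: "\<And>x y. norm (g x - g y) \<le> L * norm (x - y)"
    and "0 < L" and "g x \<noteq> 0" and "0 < \<gamma>0" and "0 < \<theta>" and "\<theta> < 1" and "0 < \<nu>" and "\<nu> < 1"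
  shows "alg3_r g x (alg3_h g \<nu> \<theta> x \<gamma>0) \<le> \<nu>"
    and "min \<gamma>0 (\<theta> * \<nu> / L) \<le> alg3_h g \<nu> \<theta> x \<gamma>0"
    and "alg3_h g \<nu> \<theta> x \<gamma>0 \<le> \<gamma>0"
proof -
  let ?G = "alg3_ls g \<theta> x \<gamma>0"
  obtain l where h: "alg3_h g \<nu> \<theta> x \<gamma>0 = ?G l"
    and accepted: "alg3_r g x (?G l) \<le> \<nu>" and rejected: "\<forall>j<l. \<nu> < alg3_r g x (?G j)"
    using alg3_h_first_accepted[OF alg3_ls_terminates[OF assms(1-7)]] by blast
  show "alg3_r g x (alg3_h g \<nu> \<theta> x \<gamma>0) \<le> \<nu>"
    using accepted h by simp
  have "?G l \<le> \<theta> ^ l * \<gamma>0"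
    using alg3_ls_rejected_bounds[OF assms(4-6) _ rejected] assms(7) by simp
  also have "\<dots> \<le> \<gamma>0"
    using assms(4-6) by (simp add: power_le_one mult_left_le_one_le)
  finally show "alg3_h g \<nu> \<theta> x \<gamma>0 \<le> \<gamma>0"
    using h by simp
  show "min \<gamma>0 (\<theta> * \<nu> / L) \<le> alg3_h g \<nu> \<theta> x \<gamma>0"
  proof (cases l)
    case 0
    then show ?thesis using h by simp
  next
    case (Suc m)
    have "\<forall>j<m. \<nu> < alg3_r g x (?G j)"
      using rejected Suc by simp
    then have "0 < ?G m"
      using alg3_ls_rejected_bounds[OF assms(4-6)] assms(7) by (meson less_imp_le)
    moreover have "\<nu> < alg3_r g x (?G m)"
      using rejected Suc by simp
    ultimately have "\<theta> * \<nu> / L \<le> ?G m * \<theta> * min 1 (1 / alg3_r g x (?G m))"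
      using assms alg3_r_le_lipschitz[OF lipschitz assms(3)]
      by (intro backtracking_step_lower_bound) auto
    then show ?thesis
      using h Suc by (simp add: Let_def)
  qed
qed

lemma alg3_h_bounds_interval:
  assumes lipschitz: "\<And>x y. norm (g x - g y) \<le> L * norm (x - y)"
    and "0 < L" and "g x \<noteq> 0" and "0 < \<theta>" and "\<theta> < 1" and "0 < \<nu>" and "\<nu> < 1"
    and "0 < hlo" and "hlo \<le> \<gamma>0" and "\<gamma>0 \<le> hup"
  shows "norm (g (x - alg3_h g \<nu> \<theta> x \<gamma>0 *\<^sub>R g x) - g x) \<le> \<nu> * norm (g x)"
    and "0 < min hlo (\<theta> * \<nu> / L)"
    and "min hlo (\<theta> * \<nu> / L) \<le> alg3_h g \<nu> \<theta> x \<gamma>0"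
    and "alg3_h g \<nu> \<theta> x \<gamma>0 \<le> hup"
proof -
  have "0 < \<gamma>0"
    using assms(8,9) by simp
  note h = alg3_h_bounds[OF lipschitz assms(2,3) this assms(4-7)]
  show "0 < min hlo (\<theta> * \<nu> / L)"
    using assms by simp
  have "min hlo (\<theta> * \<nu> / L) \<le> min \<gamma>0 (\<theta> * \<nu> / L)"
    using assms(9) by (rule min.mono) simp
  then show "min hlo (\<theta> * \<nu> / L) \<le> alg3_h g \<nu> \<theta> x \<gamma>0"
    using h(2) by (rule order_trans)
  with \<open>0 < min hlo (\<theta> * \<nu> / L)\<close> have "0 < alg3_h g \<nu> \<theta> x \<gamma>0"
    by linarith
  then show "norm (g (x - alg3_h g \<nu> \<theta> x \<gamma>0 *\<^sub>R g x) - g x) \<le> \<nu> * norm (g x)"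
    using h(1) assms(3) by (simp add: alg3_r_eq divide_le_eq)
  show "alg3_h g \<nu> \<theta> x \<gamma>0 \<le> hup"
    using h(3) assms(10) by simp
qed

subsection \<open>One iteration of Algorithm 3\<close>

definition alg3_dir :: "('a::real_normed_vector \<Rightarrow> 'a) \<Rightarrow> real \<Rightarrow> 'a \<Rightarrow> real \<Rightarrow> 'a" where
  "alg3_dir g \<beta> x h = g x - \<beta> *\<^sub>R (g x - g (x - h *\<^sub>R g x))"

text \<open>The numerator of \<open>\<alpha>\<^sub>k\<close>, simplified with \<open>x\<^sup>k - z\<^sup>k = h\<^sub>k \<nabla>f(x\<^sup>k)\<close>.\<close>
definition alg3_num :: "('a::real_inner \<Rightarrow> 'a) \<Rightarrow> real \<Rightarrow> real \<Rightarrow> 'a \<Rightarrow> real \<Rightarrow> real" where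
  "alg3_num g L \<beta> x h =
     h\<^sup>2 * ((1 - \<beta>) * (1 - L * h / 4) * (norm (g x))\<^sup>2 + \<beta> * inner (g x) (g (x - h *\<^sub>R g x)))"

lemma alg3_step_fst:
  assumes "h = alg3_h g \<nu> \<theta> x \<gamma>0" and "u = h *\<^sub>R alg3_dir g \<beta> x h"
  shows "fst (alg3_step g L \<mu> \<nu> hlo hup \<beta> \<theta> \<tau> \<eta> (x, \<gamma>0))
         = x - (\<eta> * (alg3_num g L \<beta> x h / (norm u)\<^sup>2)) *\<^sub>R u"
proof -
  have num: "(1 - \<beta>) * (1 - L * h / 4) * (norm (x - (x - h *\<^sub>R g x)))\<^sup>2
      + \<beta> * inner (x - (x - h *\<^sub>R g x)) (h *\<^sub>R g (x - h *\<^sub>R g x)) = alg3_num g L \<beta> x h"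
  proof -
    have "(norm (x - (x - h *\<^sub>R g x)))\<^sup>2 = h\<^sup>2 * (norm (g x))\<^sup>2"
      by (simp add: power_mult_distrib)
    moreover have "inner (x - (x - h *\<^sub>R g x)) (h *\<^sub>R g (x - h *\<^sub>R g x))
        = h\<^sup>2 * inner (g x) (g (x - h *\<^sub>R g x))"
      by (simp add: power2_eq_square)
    ultimately show ?thesis
      by (simp add: alg3_num_def algebra_simps)
  qed
  have den: "h\<^sup>2 * (norm (g x - \<beta> *\<^sub>R (g x - g (x - h *\<^sub>R g x))))\<^sup>2 = (norm u)\<^sup>2"
    using assms(2) by (simp add: alg3_dir_def power_mult_distrib)
  show ?thesis
    unfolding alg3_step_def Let_def fst_conv snd_conv
    unfolding assms(1)[symmetric] num den
    by (simp add: assms(2) alg3_dir_def)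
qed

lemma alg3_halfspace_contains_zeros:
  fixes f :: "'a::real_inner \<Rightarrow> real"
  assumes convex: "convex_on UNIV f" and grad: "\<And>x. GDERIV f x :> g x"
    and lipschitz: "\<And>x y. norm (g x - g y) \<le> L * norm (x - y)" and L: "0 < L"
    and "0 \<le> \<beta>" and "\<beta> \<le> 1" and "0 \<le> h" and "g p = 0"
  shows "alg3_num g L \<beta> x h \<le> inner (h *\<^sub>R alg3_dir g \<beta> x h) (x - p)"
proof -
  define z where "z = x - h *\<^sub>R g x"
  have "h * (1 - L * h / 4) \<le> 1 / L"
    using L sum_power2_ge_zero[of "1 - L * h / 2" 0]
    by (simp add: le_divide_eq power2_eq_square algebra_simps)
  moreover have "(norm (g x))\<^sup>2 / L \<le> inner (g x) (x - p)"
    using convex_lipschitz_gradient_cocoercive[OF convex grad lipschitz L, of x p] \<open>g p = 0\<close>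
    by simp
  moreover from mult_right_mono[OF calculation(1), of "(norm (g x))\<^sup>2"]
  have "h * (1 - L * h / 4) * (norm (g x))\<^sup>2 \<le> (norm (g x))\<^sup>2 / L"
    by simp
  ultimately have "h * (1 - L * h / 4) * (norm (g x))\<^sup>2 \<le> inner (g x) (x - p)"
    by linarith
  from mult_left_mono[OF this \<open>0 \<le> h\<close>]
  have gx: "h\<^sup>2 * ((1 - L * h / 4) * (norm (g x))\<^sup>2) \<le> h * inner (g x) (x - p)"
    by (simp add: power2_eq_square mult_ac)
  have "0 \<le> (norm (g z))\<^sup>2 / L"
    using L by simp
  also have "\<dots> \<le> inner (g z) (z - p)"
    using convex_lipschitz_gradient_cocoercive[OF convex grad lipschitz L, of z p] \<open>g p = 0\<close>
    by simp
  finally have "0 \<le> inner (g z) (z - p)" .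
  then have "h * inner (g x) (g z) \<le> inner (g z) (x - p)"
    by (simp add: z_def inner_diff_right inner_commute algebra_simps)
  from mult_left_mono[OF this \<open>0 \<le> h\<close>]
  have gz: "h\<^sup>2 * inner (g x) (g z) \<le> h * inner (g z) (x - p)"
    by (simp add: power2_eq_square mult_ac)
  have "inner (h *\<^sub>R alg3_dir g \<beta> x h) (x - p)
      = (1 - \<beta>) * (h * inner (g x) (x - p)) + \<beta> * (h * inner (g z) (x - p))"
    by (simp add: alg3_dir_def z_def inner_diff_left algebra_simps)
  then show ?thesis
    using mult_left_mono[OF gx, of "1 - \<beta>"] mult_left_mono[OF gz, of \<beta>] assms(5,6)
    by (simp add: alg3_num_def z_def[symmetric] algebra_simps)
qed

lemma alg3_dir_norm_bounds:
  assumes gz: "norm (g (x - h *\<^sub>R g x) - g x) \<le> \<nu> * norm (g x)" and "0 \<le> \<beta>" and "\<beta> \<le> 1"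
  shows "(1 - \<nu>) * norm (g x) \<le> norm (alg3_dir g \<beta> x h)"
    and "norm (alg3_dir g \<beta> x h) \<le> (1 + \<nu>) * norm (g x)"
proof -
  define e where "e = g (x - h *\<^sub>R g x) - g x"
  have d: "alg3_dir g \<beta> x h = g x + \<beta> *\<^sub>R e"
    by (simp add: alg3_dir_def e_def algebra_simps)
  have "norm (\<beta> *\<^sub>R e) \<le> \<nu> * norm (g x)"
    using mult_right_mono[of \<beta> 1 "norm e"] assms by (simp add: e_def)
  then show "(1 - \<nu>) * norm (g x) \<le> norm (alg3_dir g \<beta> x h)"
    and "norm (alg3_dir g \<beta> x h) \<le> (1 + \<nu>) * norm (g x)"
    unfolding d using norm_triangle_ineq[of "g x" "\<beta> *\<^sub>R e"] norm_triangle_ineq2[of "g x" "- (\<beta> *\<^sub>R e)"]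
    by (simp_all add: algebra_simps)
qed

lemma alg3_num_lower_bound:
  assumes gz: "norm (g (x - h *\<^sub>R g x) - g x) \<le> \<nu> * norm (g x)" and "0 \<le> \<beta>" and "\<beta> \<le> 1"
    and "c \<le> 1 - \<nu>" and "c \<le> 1 - L * h / 4"
  shows "h\<^sup>2 * (c * (norm (g x))\<^sup>2) \<le> alg3_num g L \<beta> x h"
proof -
  define n where "n = norm (g x)"
  define e where "e = g (x - h *\<^sub>R g x) - g x"
  have "- (n * norm e) \<le> inner (g x) e"
    using norm_cauchy_schwarz[of "g x" "- e"] by (simp add: n_def)
  moreover have "n * norm e \<le> n * (\<nu> * n)"
    using gz by (simp add: n_def e_def mult_left_mono)
  moreover have "inner (g x) (g (x - h *\<^sub>R g x)) = n\<^sup>2 + inner (g x) e"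
    by (simp add: e_def n_def inner_diff_right power2_norm_eq_inner)
  ultimately have "c * n\<^sup>2 \<le> inner (g x) (g (x - h *\<^sub>R g x))"
    using mult_right_mono[OF \<open>c \<le> 1 - \<nu>\<close>, of "n\<^sup>2"] by (simp add: power2_eq_square algebra_simps)
  moreover have "c * n\<^sup>2 \<le> (1 - L * h / 4) * n\<^sup>2"
    using \<open>c \<le> 1 - L * h / 4\<close> by (simp add: mult_right_mono)
  ultimately have "(1 - \<beta>) * (c * n\<^sup>2) + \<beta> * (c * n\<^sup>2)
      \<le> (1 - \<beta>) * ((1 - L * h / 4) * n\<^sup>2) + \<beta> * inner (g x) (g (x - h *\<^sub>R g x))"
    using assms(2,3) by (intro add_mono mult_left_mono) auto
  then have "c * n\<^sup>2 \<le> (1 - \<beta>) * (1 - L * h / 4) * n\<^sup>2 + \<beta> * inner (g x) (g (x - h *\<^sub>R g x))"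
    by (simp add: algebra_simps)
  then show ?thesis
    unfolding alg3_num_def n_def[symmetric] by (simp add: mult_left_mono)
qed

lemma alg3_separation_lower_bound:
  assumes gz: "norm (g (x - h *\<^sub>R g x) - g x) \<le> \<nu> * norm (g x)" and "0 \<le> \<beta>" and "\<beta> \<le> 1"
    and "\<nu> < 1" and "0 < h" and "0 < c" and "c \<le> 1 - \<nu>" and "c \<le> 1 - L * h / 4" and "g x \<noteq> 0"
  shows "h * c * norm (g x) / 2 \<le> alg3_num g L \<beta> x h / norm (h *\<^sub>R alg3_dir g \<beta> x h)"
proof -
  define n where "n = norm (g x)"
  define d where "d = norm (alg3_dir g \<beta> x h)"
  have "0 < n" using \<open>g x \<noteq> 0\<close> by (simp add: n_def)
  have "0 < (1 - \<nu>) * n" and "(1 + \<nu>) * n \<le> 2 * n"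
    using \<open>\<nu> < 1\<close> \<open>0 < n\<close> by simp_all
  then have "0 < d" "d \<le> 2 * n"
    using alg3_dir_norm_bounds[OF gz assms(2,3)] unfolding d_def n_def by linarith+
  have "h * c * n / 2 = h\<^sup>2 * (c * n\<^sup>2) / (h * (2 * n))"
    using \<open>0 < h\<close> \<open>0 < n\<close> by (simp add: power2_eq_square)
  also have "\<dots> \<le> h\<^sup>2 * (c * n\<^sup>2) / (h * d)"
    using \<open>0 < d\<close> \<open>d \<le> 2 * n\<close> \<open>0 < h\<close> \<open>0 < c\<close>
    by (intro divide_left_mono mult_left_mono) auto
  also have "\<dots> \<le> alg3_num g L \<beta> x h / (h * d)"
    using alg3_num_lower_bound[OF gz assms(2,3,7,8)] \<open>0 < d\<close> \<open>0 < h\<close>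
    by (simp add: n_def divide_right_mono)
  finally show ?thesis
    using \<open>0 < h\<close> by (simp add: n_def d_def)
qed

definition alg3_decrease_rate :: "real \<Rightarrow> real \<Rightarrow> real \<Rightarrow> real \<Rightarrow> real \<Rightarrow> real \<Rightarrow> real" where
  "alg3_decrease_rate L \<nu> \<theta> \<eta> hlo hup =
     \<eta> * (2 - \<eta>) * (min hlo (\<theta> * \<nu> / L) * min (1 - \<nu>) (1 - L * hup / 4) / 2)\<^sup>2"

lemma alg3_decrease_rate_pos:
  assumes "0 < L" and "0 < \<nu>" and "\<nu> < 1" and "0 < \<theta>" and "0 < hlo" and "hup < 4 / L"
    and "0 < \<eta>" and "\<eta> < 2"
  shows "0 < alg3_decrease_rate L \<nu> \<theta> \<eta> hlo hup"
proof -
  have "L * hup < 4"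
    using assms(1,6) by (simp add: less_divide_eq mult.commute)
  then have "0 < min hlo (\<theta> * \<nu> / L) * min (1 - \<nu>) (1 - L * hup / 4)"
    using assms by simp
  then have "0 < (min hlo (\<theta> * \<nu> / L) * min (1 - \<nu>) (1 - L * hup / 4) / 2)\<^sup>2"
    by (intro zero_less_power) simp
  then show ?thesis
    unfolding alg3_decrease_rate_def using assms(7,8) by (intro mult_pos_pos) auto
qed

lemma alg3_step_fejer:
  fixes f :: "'a::real_inner \<Rightarrow> real"
  assumes convex: "convex_on UNIV f" and grad: "\<And>x. GDERIV f x :> g x"
    and lipschitz: "\<And>x y. norm (g x - g y) \<le> L * norm (x - y)" and L: "0 < L"
    and \<nu>: "0 < \<nu>" "\<nu> < 1" and \<theta>: "0 < \<theta>" "\<theta> < 1" and hlo: "0 < hlo" and hup: "hup < 4 / L"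
    and \<beta>: "0 \<le> \<beta>" "\<beta> \<le> 1" and \<eta>: "0 < \<eta>" "\<eta> < 2"
    and "g x \<noteq> 0" and \<gamma>0: "hlo \<le> \<gamma>0" "\<gamma>0 \<le> hup" and "g p = 0"
  shows "(norm (fst (alg3_step g L \<mu> \<nu> hlo hup \<beta> \<theta> \<tau> \<eta> (x, \<gamma>0)) - p))\<^sup>2
      + alg3_decrease_rate L \<nu> \<theta> \<eta> hlo hup * (norm (g x))\<^sup>2 \<le> (norm (x - p))\<^sup>2"
proof -
  define h where "h = alg3_h g \<nu> \<theta> x \<gamma>0"
  define u where "u = h *\<^sub>R alg3_dir g \<beta> x h"
  define hmin where "hmin = min hlo (\<theta> * \<nu> / L)"
  define c where "c = min (1 - \<nu>) (1 - L * hup / 4)"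
  note h_bounds = alg3_h_bounds_interval[OF lipschitz L \<open>g x \<noteq> 0\<close> \<theta> \<nu> hlo \<gamma>0,
      folded h_def hmin_def]
  then have "0 < h"
    by linarith
  have "L * hup < 4"
    using hup L by (simp add: less_divide_eq mult.commute)
  moreover have "L * h \<le> L * hup"
    using h_bounds(4) L by simp
  ultimately have "0 < c" "c \<le> 1 - \<nu>" "c \<le> 1 - L * h / 4"
    using \<nu> unfolding c_def min_le_iff_disj by auto
  have "hmin * c * norm (g x) / 2 \<le> h * c * norm (g x) / 2"
    using h_bounds(3) \<open>0 < c\<close> by (intro divide_right_mono mult_right_mono) auto
  also have "\<dots> \<le> alg3_num g L \<beta> x h / norm u"
    unfolding u_def using alg3_separation_lower_bound[OF h_bounds(1) \<beta> \<nu>(2) \<open>0 < h\<close>] \<open>0 < c\<close>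
      \<open>c \<le> 1 - \<nu>\<close> \<open>c \<le> 1 - L * h / 4\<close> \<open>g x \<noteq> 0\<close> by blast
  finally have sep: "hmin * c * norm (g x) / 2 \<le> alg3_num g L \<beta> x h / norm u" .
  have "alg3_num g L \<beta> x h \<le> inner u (x - p)"
    unfolding u_def using \<open>0 < h\<close>
    by (intro alg3_halfspace_contains_zeros[OF convex grad lipschitz L \<beta> _ \<open>g p = 0\<close>]) simp
  from relaxed_projection_halfspace_decrease[OF this _ sep, of \<eta>]
  show ?thesis
    using h_bounds(2) \<open>0 < c\<close> \<open>g x \<noteq> 0\<close> \<eta>
    unfolding alg3_step_fst[OF h_def u_def] alg3_decrease_rate_def
    by (simp add: hmin_def c_def power_mult_distrib power_divide)
qed

lemma alg3_snd_bounds: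
  assumes "hlo \<le> \<gamma>00" and "\<gamma>00 \<le> hup"
  shows "hlo \<le> snd (alg3 g L \<mu> \<nu> hlo hup \<beta> \<theta> \<tau> \<eta> x0 \<gamma>00 k)
    \<and> snd (alg3 g L \<mu> \<nu> hlo hup \<beta> \<theta> \<tau> \<eta> x0 \<gamma>00 k) \<le> hup"
proof (cases k)
  case (Suc j)
  have "hlo \<le> hup"
    using assms by linarith
  then show ?thesis
    using Suc by (simp add: alg3_step_def Let_def proj_interval_def)
qed (use assms in simp)

theorem theorem5:
  fixes f :: "real ^ 'n \<Rightarrow> real" and g :: "real ^ 'n \<Rightarrow> real ^ 'n"
    and L \<mu> \<nu> hlo hup \<gamma>00 \<beta> \<theta> \<tau> \<eta> :: real and x0 :: "real ^ 'n"
  assumes convex: "convex_on UNIV f"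
    and grad: "\<And>x. GDERIV f x :> g x"
    and lipschitz: "\<And>x y. norm (g x - g y) \<le> L * norm (x - y)"
    and nonempty: "{x. g x = 0} \<noteq> {}"
    and params: "0 < \<mu>" "\<mu> < \<nu>" "\<nu> < 1"
      "0 < hlo" "hlo < 1" "1 \<le> \<gamma>00" "\<gamma>00 \<le> hup" "hup < 4 / L"
      "0 \<le> \<beta>" "\<beta> \<le> 1" "0 < \<theta>" "\<theta> < 1" "1 < \<tau>" "0 < \<eta>" "\<eta> < 2"
    and nonstop: "\<And>k. g (fst (alg3 g L \<mu> \<nu> hlo hup \<beta> \<theta> \<tau> \<eta> x0 \<gamma>00 k)) \<noteq> 0"
  shows "\<exists>xs \<in> {x. g x = 0}.
           (\<lambda>k. fst (alg3 g L \<mu> \<nu> hlo hup \<beta> \<theta> \<tau> \<eta> x0 \<gamma>00 k)) \<longlonglongrightarrow> xs"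
proof -
  let ?s = "alg3 g L \<mu> \<nu> hlo hup \<beta> \<theta> \<tau> \<eta> x0 \<gamma>00"
  have "0 < 4 / L"
    using params(6-8) by linarith
  then have L: "0 < L"
    by (simp add: zero_less_divide_iff)
  have "hlo \<le> \<gamma>00"
    using params by linarith
  note \<gamma>0 = alg3_snd_bounds[OF this params(7)]
  obtain p where "g p = 0"
    using nonempty by auto
  have "\<exists>x. g x = 0 \<and> (\<lambda>k. fst (?s k)) \<longlonglongrightarrow> x"
  proof (rule fejer_sufficient_decrease_convergent[where g = g, OF _ \<open>g p = 0\<close>])
    show "continuous_on UNIV g"
      using L lipschitz by (intro lipschitz_on_continuous_on[of L] lipschitz_onI) (auto simp: dist_norm)
    show "0 < alg3_decrease_rate L \<nu> \<theta> \<eta> hlo hup"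
      using L params by (intro alg3_decrease_rate_pos) auto
    show "(norm (fst (?s (Suc k)) - q))\<^sup>2 + alg3_decrease_rate L \<nu> \<theta> \<eta> hlo hup * (norm (g (fst (?s k))))\<^sup>2
        \<le> (norm (fst (?s k) - q))\<^sup>2" if "g q = 0" for q k
      using alg3_step_fejer[OF convex grad lipschitz L, of \<nu> \<theta> hlo hup \<beta> \<eta> "fst (?s k)" "snd (?s k)" q \<mu> \<tau>]
        \<gamma>0[of g L \<mu> \<nu> \<beta> \<theta> \<tau> \<eta> x0 k] params nonstop[of k] \<open>g q = 0\<close>
      by simp
  qed
  then show ?thesis by simp
qed

end
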